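(* There is an absolute constant $C$ such that if $E\subset\mathbb{Z}^2$ is sparse with respect to a sequence $(\alpha_k,\beta_k)_{k\ge1}$ (integers, $\alpha_k\le\beta_k$), then the Besicovitch density of $E$ is at most $C\sum_k(\alpha_k/\beta_k)^2$.
   Context: Distances on $\mathbb{Z}^2$ are $\ell_\infty$; the diameter of a set is the maximal distance between its elements; the $\beta$-neighborhood of $X$ is the set of points at distance at most $\beta$ from some point of $X$. For $E\subset\mathbb{Z}^2$ and integers $\beta\ge\alpha>0$, a nonempty $X\subset E$ is an $(\alpha,\beta)$-island in $E$ if its diameter is at most $\alpha$ and the $\beta$-neighborhood of $X$ contains no point of $E\setminus X$. The cleaning process sets $E_0=E$ and obtains $E_i$ from $E_{i-1}$ by removing all $(\alpha_i,\beta_i)$-islands of $E_{i-1}$ (rank $i$ islands); a point is affected at step $i$ if it lies in the $\beta_i$-neighborhood of some rank $i$ island. $E$ is sparse if every point of $E$ is removed at some step and every point of $\mathbb{Z}^2$ is affected at only finitely many steps. The Besicovitch density of $E$ is $\limsup_{n\to\infty}$ of the fraction of points of $E$ in the square of side $n$ centered at a fixed point (independent of the point). *)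

theory Defs
  imports "HOL-Analysis.Analysis" "HOL-Library.Extended_Nonnegative_Real"
begin

type_synonym pt = "int \<times> int"

definition dinf :: "pt \<Rightarrow> pt \<Rightarrow> int" where
  "dinf p q = max \<bar>fst p - fst q\<bar> \<bar>snd p - snd q\<bar>"

definition nbhd :: "int \<Rightarrow> pt set \<Rightarrow> pt set" where
  "nbhd b X = {y. \<exists>x\<in>X. dinf x y \<le> b}"

definition island :: "int \<Rightarrow> int \<Rightarrow> pt set \<Rightarrow> pt set \<Rightarrow> bool" where
  "island a b E X \<longleftrightarrow> X \<noteq> {} \<and> X \<subseteq> E \<and> (\<forall>x\<in>X. \<forall>y\<in>X. dinf x y \<le> a)
     \<and> nbhd b X \<inter> (E - X) = {}"

text \<open>Cleaning process; step i+1 of the paper uses parameters (al i, be i) (0-based sequences).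
  clean al be E i is the paper's E_i.\<close>
fun clean :: "(nat \<Rightarrow> int) \<Rightarrow> (nat \<Rightarrow> int) \<Rightarrow> pt set \<Rightarrow> nat \<Rightarrow> pt set" where
  "clean al be E 0 = E"
| "clean al be E (Suc i) =
     clean al be E i - \<Union>{X. island (al i) (be i) (clean al be E i) X}"

definition affected :: "(nat \<Rightarrow> int) \<Rightarrow> (nat \<Rightarrow> int) \<Rightarrow> pt set \<Rightarrow> nat \<Rightarrow> pt \<Rightarrow> bool" where
  "affected al be E i p \<longleftrightarrow>
     (\<exists>X. island (al i) (be i) (clean al be E i) X \<and> p \<in> nbhd (be i) X)"

definition sparse :: "(nat \<Rightarrow> int) \<Rightarrow> (nat \<Rightarrow> int) \<Rightarrow> pt set \<Rightarrow> bool" where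
  "sparse al be E \<longleftrightarrow> (\<forall>p\<in>E. \<exists>i. p \<notin> clean al be E i)
     \<and> (\<forall>p. finite {i. affected al be E i p})"

definition square :: "pt \<Rightarrow> nat \<Rightarrow> pt set" where
  "square c n = {q. dinf c q \<le> int n}"

definition bes_density :: "pt set \<Rightarrow> pt \<Rightarrow> ennreal" where
  "bes_density E c = limsup (\<lambda>n. ennreal (real (card (E \<inter> square c n)) / (2 * real n + 1)^2))"

end

theory Submission
  imports Defs "HOL-Real_Asymp.Real_Asymp"
begin

(* The points of E in square c n are all removed at some
   finite step, so they are covered by the unions of rank k islands, k < N.
   1. Packing: the union of (a,b)-islands is "(a,b)-clustered": two of its points at distance
      at most b are at distance at most a.  Cutting square c n into at most (2n/(b+1)+1)^2
      cells of side b+1, each cell meets a clustered set in at most (2a+1)^2 points.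
   2. Per step: if b < n this gives at most 81 n^2 (a/b)^2 points of rank k in the square;
      if b >= n and some rank k point lies in the square, then c is affected at step k and
      the bound is 36 a^2.
   3. Summing over k, the second kind of term contributes a constant D independent of n
      (c is affected at finitely many steps), so the density in square c n is at most
      81/4 * sum_k (a_k/b_k)^2 + D/(2n+1)^2, and the error term vanishes in the limsup. *)

lemma square_eq:
  "square x m = {fst x - int m..fst x + int m} \<times> {snd x - int m..snd x + int m}"
  by (auto simp: square_def dinf_def)

lemma finite_square: "finite (square x m)"
  unfolding square_eq by simp

lemma card_square: "card (square x m) = (2 * m + 1)^2"
proof -
  have "card (square x m) = nat (1 + int m * 2) * nat (1 + int m * 2)"
    unfolding square_eq by (simp add: card_cartesian_product add.commute mult.commute)
  also have "nat (1 + int m * 2) = 2 * m + 1" by simp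
  finally show ?thesis by (simp add: power2_eq_square)
qed

(* Two integers with the same quotient by m differ by less than m; this is what makes the
   points of one grid cell close to each other. *)
lemma div_eq_close:
  fixes u v m :: int
  assumes "0 < m" "u div m = v div m"
  shows "\<bar>u - v\<bar> < m"
proof -
  have "u = m * (v div m) + u mod m" using assms(2) by (metis div_mult_mod_eq mult.commute)
  moreover have "v = m * (v div m) + v mod m" by simp
  moreover have "0 \<le> u mod m" "u mod m < m" "0 \<le> v mod m" "v mod m < m"
    using assms by simp_all
  ultimately show ?thesis by linarith
qed

lemma card_le_card_times_fibre:
  assumes "finite F" "finite C" "g ` F \<subseteq> C" "\<And>j. j \<in> g ` F \<Longrightarrow> card {q\<in>F. g q = j} \<le> m"
  shows "card F \<le> card C * m"
proof -
  have "F = (\<Union>j\<in>g ` F. {q\<in>F. g q = j})" by auto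
  hence "card F \<le> (\<Sum>j\<in>g ` F. card {q\<in>F. g q = j})"
    using card_UN_le[of "g ` F" "\<lambda>j. {q\<in>F. g q = j}"] assms(1) by simp
  also have "\<dots> \<le> card (g ` F) * m"
    using sum_bounded_above[of "g ` F" _ m] assms(4) by simp
  also have "\<dots> \<le> card C * m"
    using card_mono[OF assms(2,3)] by simp
  finally show ?thesis .
qed

definition clustered :: "int \<Rightarrow> int \<Rightarrow> pt set \<Rightarrow> bool" where
  "clustered a b F \<longleftrightarrow> (\<forall>x\<in>F. \<forall>y\<in>F. dinf x y \<le> b \<longrightarrow> dinf x y \<le> a)"

lemma clustered_subset: "clustered a b F \<Longrightarrow> G \<subseteq> F \<Longrightarrow> clustered a b G"
  unfolding clustered_def by blast

lemma clustered_islands: "clustered a b (\<Union>{X. island a b A X})"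
  unfolding clustered_def
proof (intro ballI impI)
  fix x y assume x: "x \<in> \<Union>{X. island a b A X}" and y: "y \<in> \<Union>{X. island a b A X}"
    and close: "dinf x y \<le> b"
  obtain X where X: "island a b A X" "x \<in> X" using x by blast
  have "y \<in> A" using y unfolding island_def by blast
  moreover have "y \<in> nbhd b X" using X(2) close by (auto simp: nbhd_def)
  ultimately have "y \<in> X" using X(1) unfolding island_def by blast
  thus "dinf x y \<le> a" using X unfolding island_def by blast
qed

(* A clustered set of diameter at most b lies in an a-square around any of its points. *)
lemma card_clustered_small:
  assumes "clustered a b G" "finite G" "0 \<le> a" "x0 \<in> G" "\<And>q. q \<in> G \<Longrightarrow> dinf x0 q \<le> b"
  shows "card G \<le> (2 * nat a + 1)^2"
proof -
  have "G \<subseteq> square x0 (nat a)"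
    using assms unfolding clustered_def square_def by auto
  hence "card G \<le> card (square x0 (nat a))" by (rule card_mono[OF finite_square])
  thus ?thesis by (simp add: card_square)
qed

(* Packing lemma: an (a,b)-clustered subset of square c n has at most
   (2n div (b+1) + 1)^2 (2a+1)^2 points; the grid cells of side b+1 are the fibres. *)
lemma card_clustered_in_square:
  assumes cl: "clustered a b F" and sub: "F \<subseteq> square c n" and "0 \<le> a" "0 \<le> b"
  defines "M \<equiv> 2 * int n div (b + 1)"
  shows "card F \<le> (nat M + 1)^2 * (2 * nat a + 1)^2"
proof -
  define cell where "cell q = ((fst q - fst c + int n) div (b + 1), (snd q - snd c + int n) div (b + 1))"
    for q :: pt
  have b1: "0 < b + 1" using assms by simp
  have finF: "finite F" using sub finite_square finite_subset by blast
  have cells: "cell ` F \<subseteq> {0..M} \<times> {0..M}"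
  proof
    fix j assume "j \<in> cell ` F"
    then obtain q where q: "q \<in> F" "j = cell q" by blast
    have "dinf c q \<le> int n" using q sub unfolding square_def by auto
    hence "0 \<le> fst q - fst c + int n" "fst q - fst c + int n \<le> 2 * int n"
      "0 \<le> snd q - snd c + int n" "snd q - snd c + int n \<le> 2 * int n"
      unfolding dinf_def by auto
    thus "j \<in> {0..M} \<times> {0..M}" unfolding q(2) cell_def M_def
      using b1 by (auto simp: pos_imp_zdiv_nonneg_iff zdiv_mono1)
  qed
  have fibre: "card {q\<in>F. cell q = j} \<le> (2 * nat a + 1)^2" if j: "j \<in> cell ` F" for j
  proof -
    obtain x0 where x0: "x0 \<in> F" "cell x0 = j" using j by blast
    have "dinf x0 q \<le> b" if "q \<in> {q\<in>F. cell q = j}" for q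
    proof -
      have "cell q = cell x0" using that x0 by simp
      hence "\<bar>(fst x0 - fst c + int n) - (fst q - fst c + int n)\<bar> < b + 1"
        "\<bar>(snd x0 - snd c + int n) - (snd q - snd c + int n)\<bar> < b + 1"
        using div_eq_close[OF b1] unfolding cell_def by (metis prod.inject)+
      thus ?thesis unfolding dinf_def by simp
    qed
    thus ?thesis
      using x0 finF \<open>0 \<le> a\<close> clustered_subset[OF cl]
      by (intro card_clustered_small[of a b _ x0]) auto
  qed
  have "card F \<le> card ({0..M} \<times> {0..M}) * (2 * nat a + 1)^2"
    by (rule card_le_card_times_fibre[OF finF _ cells fibre]) simp_all
  also have "card ({0..M} \<times> {0..M}) = (nat M + 1)^2"
    using b1 by (simp add: card_cartesian_product power2_eq_square nat_add_distrib
        pos_imp_zdiv_nonneg_iff M_def)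
  finally show ?thesis .
qed

definition rank_set :: "(nat \<Rightarrow> int) \<Rightarrow> (nat \<Rightarrow> int) \<Rightarrow> pt set \<Rightarrow> nat \<Rightarrow> pt set" where
  "rank_set al be E k = \<Union>{X. island (al k) (be k) (clean al be E k) X}"

lemma clustered_rank_set: "clustered (al k) (be k) (rank_set al be E k)"
  unfolding rank_set_def by (rule clustered_islands)

lemma clean_Suc: "clean al be E (Suc k) = clean al be E k - rank_set al be E k"
  by (simp add: rank_set_def)

lemma clean_antimono: "i \<le> j \<Longrightarrow> clean al be E j \<subseteq> clean al be E i"
  by (induction j rule: dec_induct) (auto simp: clean_Suc)

lemma removed_before:
  assumes "p \<in> E" "p \<notin> clean al be E N"
  shows "\<exists>k<N. p \<in> rank_set al be E k"
  using assms(2)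
proof (induction N)
  case 0 then show ?case using assms(1) by simp
next
  case (Suc N)
  show ?case
  proof (cases "p \<in> clean al be E N")
    case True
    hence "p \<in> rank_set al be E N" using Suc.prems by (auto simp: rank_set_def)
    thus ?thesis by blast
  next
    case False
    thus ?thesis using Suc.IH less_SucI by blast
  qed
qed

lemma sparse_finite_region_removed:
  assumes "sparse al be E" "finite S"
  shows "\<exists>N. E \<inter> S \<subseteq> (\<Union>k<N. rank_set al be E k)"
proof -
  have "\<forall>p\<in>E \<inter> S. \<exists>i. p \<notin> clean al be E i" using assms(1) unfolding sparse_def by blast
  then obtain t where t: "\<forall>p\<in>E \<inter> S. p \<notin> clean al be E (t p)" by (rule bchoice[elim_format]) blast
  define N where "N = Max (t ` (E \<inter> S))"
  have "E \<inter> S \<subseteq> (\<Union>k<N. rank_set al be E k)"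
  proof
    fix p assume p: "p \<in> E \<inter> S"
    have "t p \<le> N" unfolding N_def using assms(2) p by simp
    hence "p \<notin> clean al be E N" using t p clean_antimono[of "t p" N al be E] by blast
    then obtain k where "k < N" "p \<in> rank_set al be E k"
      using removed_before[of p E al be N] p by blast
    thus "p \<in> (\<Union>k<N. rank_set al be E k)" by blast
  qed
  thus ?thesis by blast
qed

lemma rank_set_near_affected:
  assumes "q \<in> rank_set al be E k" "dinf q c \<le> be k"
  shows "affected al be E k c"
proof -
  obtain X where "island (al k) (be k) (clean al be E k) X" "q \<in> X"
    using assms(1) unfolding rank_set_def by blast
  thus ?thesis using assms(2) unfolding affected_def nbhd_def by blast
qed

(* Arithmetic for the two regimes of the per-step bound (m plays the role of
   2n div (b+1)). *)
lemma cell_count_small: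
  fixes m a :: real
  assumes "0 \<le> m" "m \<le> 1" "1 \<le> a"
  shows "(m + 1)^2 * (2 * a + 1)^2 \<le> 36 * a^2"
proof -
  have "(m + 1)^2 * (2 * a + 1)^2 \<le> 2^2 * (3 * a)^2"
    using assms by (intro mult_mono power_mono) auto
  thus ?thesis by (simp add: power_mult_distrib)
qed

lemma cell_count_large:
  fixes m a b n :: real
  assumes "0 \<le> m" "1 \<le> a" "a \<le> b" "b < n" "(b + 1) * m \<le> 2 * n"
  shows "(m + 1)^2 * (2 * a + 1)^2 \<le> 81 * n^2 * (a / b)^2"
proof -
  have "b * (m + 1) \<le> 3 * n" using assms by (simp add: algebra_simps)
  hence "m + 1 \<le> 3 * n / b" using assms by (simp add: field_simps)
  hence "(m + 1)^2 * (2 * a + 1)^2 \<le> (3 * n / b)^2 * (3 * a)^2"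
    using assms by (intro mult_mono power_mono) auto
  also have "\<dots> = 81 * n^2 * (a / b)^2" by (simp add: power_mult_distrib power_divide)
  finally show ?thesis .
qed

lemma rank_set_in_square_packing:
  assumes "0 < al k" "al k \<le> be k"
  shows "real (card (rank_set al be E k \<inter> square c n))
    \<le> (real_of_int (2 * int n div (be k + 1)) + 1)^2 * (2 * real_of_int (al k) + 1)^2"
proof -
  let ?F = "rank_set al be E k \<inter> square c n" and ?M = "2 * int n div (be k + 1)"
  have M0: "0 \<le> ?M" using assms by (simp add: pos_imp_zdiv_nonneg_iff)
  have "clustered (al k) (be k) ?F" by (rule clustered_subset[OF clustered_rank_set]) blast
  hence "card ?F \<le> (nat ?M + 1)^2 * (2 * nat (al k) + 1)^2"
    using assms by (intro card_clustered_in_square) auto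
  hence "real (card ?F) \<le> real ((nat ?M + 1)^2 * (2 * nat (al k) + 1)^2)"
    by (simp only: of_nat_le_iff)
  also have "\<dots> = (real_of_int ?M + 1)^2 * (2 * real_of_int (al k) + 1)^2"
    using M0 assms by (simp add: add.commute)
  finally show ?thesis .
qed

lemma rank_set_in_square_bound:
  assumes pos: "0 < al k" "al k \<le> be k"
  shows "real (card (rank_set al be E k \<inter> square c n))
    \<le> 81 * (real n)^2 * (real_of_int (al k) / real_of_int (be k))^2
       + (if affected al be E k c then 36 * (real_of_int (al k))^2 else 0)"
    (is "real (card ?F) \<le> ?main + ?extra")
proof -
  define M where "M = 2 * int n div (be k + 1)"
  have packing: "real (card ?F) \<le> (real_of_int M + 1)^2 * (2 * real_of_int (al k) + 1)^2"
    unfolding M_def using rank_set_in_square_packing[of al k be E c n] pos by simp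
  have M0: "0 \<le> M" unfolding M_def using pos by (simp add: pos_imp_zdiv_nonneg_iff)
  have "(be k + 1) * M + 2 * int n mod (be k + 1) = 2 * int n"
    unfolding M_def by (metis mult_div_mod_eq)
  moreover have "0 \<le> 2 * int n mod (be k + 1)" using pos by simp
  ultimately have M_le_int: "(be k + 1) * M \<le> 2 * int n" by linarith
  hence "real_of_int ((be k + 1) * M) \<le> real_of_int (2 * int n)"
    by (simp only: of_int_le_iff)
  hence M_le: "(real_of_int (be k) + 1) * real_of_int M \<le> 2 * real n" by simp
  consider "?F = {}" | "int n \<le> be k" "?F \<noteq> {}" | "be k < int n" by linarith
  thus ?thesis
  proof cases
    case 1 thus ?thesis by simp
  next
    case 2
    then obtain q where q: "q \<in> rank_set al be E k" "dinf c q \<le> int n"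
      unfolding square_def by blast
    have "dinf q c \<le> be k" using q(2) 2(1) unfolding dinf_def by (simp add: abs_minus_commute)
    hence "?extra = 36 * (real_of_int (al k))^2"
      using rank_set_near_affected[OF q(1)] by simp
    moreover have "M \<le> 1"
    proof (rule ccontr)
      assume "\<not> M \<le> 1"
      hence "(be k + 1) * 2 \<le> (be k + 1) * M" using pos by (intro mult_left_mono) auto
      moreover have "(be k + 1) * 2 = 2 * be k + 2" by simp
      ultimately show False using M_le_int 2(1) by linarith
    qed
    hence "(real_of_int M + 1)^2 * (2 * real_of_int (al k) + 1)^2 \<le> 36 * (real_of_int (al k))^2"
      using M0 pos by (intro cell_count_small) auto
    moreover have "0 \<le> ?main" by simp
    ultimately show ?thesis using packing by linarith
  next
    case 3
    have "(real_of_int M + 1)^2 * (2 * real_of_int (al k) + 1)^2 \<le> ?main"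
      using M0 pos 3 M_le by (intro cell_count_large) auto
    moreover have "0 \<le> ?extra" by simp
    ultimately show ?thesis using packing by linarith
  qed
qed

lemma card_in_square_bound:
  fixes c :: pt and n :: nat
  assumes pos: "\<forall>k. 0 < al k \<and> al k \<le> be k" and sp: "sparse al be E"
  defines "D \<equiv> (\<Sum>k | affected al be E k c. 36 * (real_of_int (al k))^2)"
  shows "\<exists>N. real (card (E \<inter> square c n))
           \<le> 81 * (real n)^2 * (\<Sum>k<N. (real_of_int (al k) / real_of_int (be k))^2) + D"
proof -
  define K where "K = {k. affected al be E k c}"
  let ?extra = "\<lambda>k. if k \<in> K then 36 * (real_of_int (al k))^2 else 0"
  have "\<forall>p. finite {i. affected al be E i p}" using sp unfolding sparse_def by (rule conjunct2)
  hence finK: "finite K" unfolding K_def by (rule spec)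
  obtain N where "E \<inter> square c n \<subseteq> (\<Union>k<N. rank_set al be E k)"
    using sparse_finite_region_removed[OF sp finite_square] by (rule exE)
  hence cover: "E \<inter> square c n \<subseteq> (\<Union>k<N. rank_set al be E k \<inter> square c n)" by auto
  have "card (E \<inter> square c n) \<le> card (\<Union>k<N. rank_set al be E k \<inter> square c n)"
    by (rule card_mono[OF _ cover]) (simp add: finite_square)
  also have "\<dots> \<le> (\<Sum>k<N. card (rank_set al be E k \<inter> square c n))"
    by (rule card_UN_le) simp
  finally have "real (card (E \<inter> square c n))
      \<le> (\<Sum>k<N. real (card (rank_set al be E k \<inter> square c n)))"
    by (simp flip: of_nat_sum)
  also have "\<dots> \<le> (\<Sum>k<N. 81 * (real n)^2 * (real_of_int (al k) / real_of_int (be k))^2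
      + ?extra k)"
  proof (rule sum_mono)
    fix k
    show "real (card (rank_set al be E k \<inter> square c n))
        \<le> 81 * (real n)^2 * (real_of_int (al k) / real_of_int (be k))^2 + ?extra k"
      using rank_set_in_square_bound[of al k be E c n] pos unfolding K_def by simp
  qed
  also have "\<dots> = 81 * (real n)^2 * (\<Sum>k<N. (real_of_int (al k) / real_of_int (be k))^2)
      + (\<Sum>k\<in>{..<N} \<inter> K. 36 * (real_of_int (al k))^2)"
    by (simp add: sum.distrib sum_distrib_left sum.inter_restrict)
  also have "\<dots> \<le> 81 * (real n)^2 * (\<Sum>k<N. (real_of_int (al k) / real_of_int (be k))^2) + D"
  proof -
    have "(\<Sum>k\<in>{..<N} \<inter> K. 36 * (real_of_int (al k))^2) \<le> D"
      unfolding D_def K_def[symmetric] by (rule sum_mono2[OF finK]) auto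
    thus ?thesis by linarith
  qed
  finally show ?thesis by (rule exI)
qed

(* Dividing by the area (2n+1)^2 >= 4n^2 of the square. *)
lemma divide_by_area:
  fixes x P D :: real and n :: nat
  assumes "x \<le> 81 * (real n)^2 * P + D" "0 \<le> P"
  shows "x / (2 * real n + 1)^2 \<le> 81/4 * P + D / (2 * real n + 1)^2"
proof -
  define s where "s = (2 * real n + 1)^2"
  have s0: "0 < s" unfolding s_def by (simp add: add_pos_nonneg)
  have "4 * (real n)^2 \<le> s" unfolding s_def by (simp add: power2_eq_square algebra_simps)
  hence "4 * (real n)^2 * P \<le> s * P" using assms(2) by (rule mult_right_mono)
  hence "x \<le> 81/4 * P * s + D" using assms(1) by (simp add: algebra_simps)
  hence "x / s \<le> (81/4 * P * s + D) / s" using s0 by (simp add: divide_right_mono)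
  also have "\<dots> = 81/4 * P + D / s" using s0 by (simp add: add_divide_distrib)
  finally show ?thesis unfolding s_def .
qed

lemma density_in_square_bound:
  fixes c :: pt and n :: nat
  assumes "\<forall>k. 0 < al k \<and> al k \<le> be k" "sparse al be E"
  defines "D \<equiv> (\<Sum>k | affected al be E k c. 36 * (real_of_int (al k))^2)"
  shows "ennreal (real (card (E \<inter> square c n)) / (2 * real n + 1)^2)
    \<le> ennreal (81/4) * (\<Sum>k. ennreal ((real_of_int (al k) / real_of_int (be k))^2))
      + ennreal (D / (2 * real n + 1)^2)"
proof -
  define t where "t k = (real_of_int (al k) / real_of_int (be k))^2" for k
  obtain N where N: "real (card (E \<inter> square c n)) \<le> 81 * (real n)^2 * (\<Sum>k<N. t k) + D"
    using card_in_square_bound[OF assms(1,2), of c n] unfolding D_def t_def by (rule exE)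
  have P0: "0 \<le> (\<Sum>k<N. t k)" and D0: "0 \<le> D"
    unfolding t_def D_def by (simp_all add: sum_nonneg)
  have "ennreal (real (card (E \<inter> square c n)) / (2 * real n + 1)^2)
      \<le> ennreal (81/4 * (\<Sum>k<N. t k) + D / (2 * real n + 1)^2)"
    by (rule ennreal_leI[OF divide_by_area[OF N P0]])
  also have "\<dots> = ennreal (81/4) * ennreal (\<Sum>k<N. t k) + ennreal (D / (2 * real n + 1)^2)"
    using P0 D0 by (subst ennreal_plus) (simp_all add: ennreal_mult[symmetric] del: ennreal_numeral)
  also have "\<dots> = ennreal (81/4) * (\<Sum>k<N. ennreal (t k)) + ennreal (D / (2 * real n + 1)^2)"
    unfolding t_def by simp
  also have "\<dots> \<le> ennreal (81/4) * (\<Sum>k. ennreal (t k)) + ennreal (D / (2 * real n + 1)^2)"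
    by (intro add_right_mono mult_left_mono sum_le_suminf) auto
  finally show ?thesis unfolding t_def .
qed

lemma limsup_le_vanishing_error:
  fixes x :: "nat \<Rightarrow> ennreal"
  assumes "\<And>n. x n \<le> L + ennreal (e n)" "e \<longlonglongrightarrow> 0"
  shows "limsup x \<le> L"
proof -
  have "(\<lambda>n. L + ennreal (e n)) \<longlonglongrightarrow> L + ennreal 0"
    by (intro tendsto_add tendsto_const tendsto_ennrealI assms(2))
  hence "limsup (\<lambda>n. L + ennreal (e n)) = L" by (simp add: lim_imp_Limsup)
  moreover have "limsup x \<le> limsup (\<lambda>n. L + ennreal (e n))"
    by (rule Limsup_mono) (simp add: assms(1))
  ultimately show ?thesis by simp
qed

theorem lemma2:
  "\<exists>C::real. \<forall>(E::pt set) (al::nat \<Rightarrow> int) (be::nat \<Rightarrow> int) (c::pt).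
     (\<forall>k. 0 < al k \<and> al k \<le> be k) \<and> sparse al be E \<longrightarrow>
     bes_density E c \<le> ennreal C * (\<Sum>k. ennreal ((real_of_int (al k) / real_of_int (be k))^2))"
proof (intro exI[of _ "81/4"] allI impI)
  fix E :: "pt set" and al be :: "nat \<Rightarrow> int" and c :: pt
  assume "(\<forall>k. 0 < al k \<and> al k \<le> be k) \<and> sparse al be E"
  hence pos: "\<forall>k. 0 < al k \<and> al k \<le> be k" and sp: "sparse al be E" by simp_all
  define D where "D = (\<Sum>k | affected al be E k c. 36 * (real_of_int (al k))^2)"
  show "bes_density E c
      \<le> ennreal (81/4) * (\<Sum>k. ennreal ((real_of_int (al k) / real_of_int (be k))^2))"
    unfolding bes_density_def
  proof (rule limsup_le_vanishing_error)
    show "ennreal (real (card (E \<inter> square c n)) / (2 * real n + 1)^2)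
        \<le> ennreal (81/4) * (\<Sum>k. ennreal ((real_of_int (al k) / real_of_int (be k))^2))
          + ennreal (D / (2 * real n + 1)^2)" for n
      using density_in_square_bound[OF pos sp] unfolding D_def .
    show "(\<lambda>n::nat. D / (2 * real n + 1)^2) \<longlonglongrightarrow> 0" by real_asymp
  qed
qed

end
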